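(* Let $n>2$ and $G_n=BS(1,n)=\langle a,b\mid bab^{-1}=a^n\rangle$. Then for every $k>0$, $G_n$ is not $k$-chordal with respect to the generating set $\{a,b\}$.
   Context: For a group $G$ with finite generating set $S$, $S^{\pm1}=S\cup S^{-1}\setminus\{e\}$. A relation $s_1\cdots s_n=e$ with $n>2$, $s_i\in S^{\pm1}$, is simple if $s_p\cdots s_q=e$ holds exactly when $(p,q)=(1,n)$. $G$ is $k$-chordal with respect to $S$ if for every simple relation $s_1\cdots s_n=e$ with $n\ge k$ there exist $1\le i<j\le n$ and $s'_1,\dots,s'_r\in S^{\pm1}$ with $s_i\cdots s_j=s'_1\cdots s'_r$ and $r\le\min\{j-i,\,n-j+i-2\}$ (equivalently, every cycle of length at least $k$ in $Cay(G,S)$ has a shortcut). *)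

theory Defs
  imports Complex_Main "HOL-Algebra.Group" "HOL-Algebra.Generated_Groups"
begin

definition sym_gens :: "('a, 'b) monoid_scheme \<Rightarrow> 'a set \<Rightarrow> 'a set" where
  "sym_gens G S = (S \<union> m_inv G ` S) - {\<one>\<^bsub>G\<^esub>}"

definition word_prod :: "('a, 'b) monoid_scheme \<Rightarrow> 'a list \<Rightarrow> 'a" where
  "word_prod G ws = foldr (\<lambda>x y. x \<otimes>\<^bsub>G\<^esub> y) ws \<one>\<^bsub>G\<^esub>"

text \<open>The subword s_p ... s_q (1-based indices, p \<le> q).\<close>
definition subword :: "'a list \<Rightarrow> nat \<Rightarrow> nat \<Rightarrow> 'a list" where
  "subword ws p q = take (Suc q - p) (drop (p - 1) ws)"

definition simple_relation :: "('a, 'b) monoid_scheme \<Rightarrow> 'a set \<Rightarrow> 'a list \<Rightarrow> bool" where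
  "simple_relation G S ws \<longleftrightarrow>
     length ws > 2 \<and> set ws \<subseteq> sym_gens G S \<and>
     (\<forall>p q. 1 \<le> p \<and> p \<le> q \<and> q \<le> length ws \<longrightarrow>
        (word_prod G (subword ws p q) = \<one>\<^bsub>G\<^esub> \<longleftrightarrow> (p = 1 \<and> q = length ws)))"

text \<open>Bounds are computed in int so that n - j + i - 2 is not truncated.\<close>
definition k_chordal :: "('a, 'b) monoid_scheme \<Rightarrow> 'a set \<Rightarrow> nat \<Rightarrow> bool" where
  "k_chordal G S k \<longleftrightarrow>
     (\<forall>ws. simple_relation G S ws \<and> length ws \<ge> k \<longrightarrow>
        (\<exists>i j ws'. 1 \<le> i \<and> i < j \<and> j \<le> length ws \<and> set ws' \<subseteq> sym_gens G S \<and>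
            word_prod G (subword ws i j) = word_prod G ws' \<and>
            int (length ws') \<le> min (int j - int i) (int (length ws) - int j + int i - 2)))"

text \<open>Affine group of Q: (r,t) is the map x \<mapsto> r*x + t, product = composition.\<close>
definition affQ :: "(rat \<times> rat) monoid" where
  "affQ = \<lparr>carrier = {(r, t). r \<noteq> 0},
           monoid.mult = (\<lambda>(r1, t1) (r2, t2). (r1 * r2, r1 * t2 + t1)),
           one = (1, 0)\<rparr>"

definition bs_a :: "rat \<times> rat" where "bs_a = (1, 1)"
definition bs_b :: "nat \<Rightarrow> rat \<times> rat" where "bs_b n = (of_nat n, 0)"

text \<open>BS(1,n) realised faithfully as the subgroup of the affine group of Q generated by
  a : x \<mapsto> x + 1 and b : x \<mapsto> n x (indeed b a b^{-1} = a^n).\<close>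
definition BS :: "nat \<Rightarrow> (rat \<times> rat) monoid" where
  "BS n = affQ\<lparr>carrier := generate affQ {bs_a, bs_b n}\<rparr>"

end

theory Submission
  imports Defs
begin

text \<open>
  In the affine model, right multiplication of \<open>x \<mapsto> n\<^sup>e x + t\<close> by \<open>b\<^sup>\<plusminus>\<^sup>1\<close> moves the
  level \<open>e\<close> by \<open>\<plusminus>1\<close>, and by \<open>a\<^sup>\<plusminus>\<^sup>1\<close> moves the translation \<open>t\<close> by \<open>\<plusminus>n\<^sup>e\<close>. Hence a word
  whose levels stay in \<open>[L, M]\<close> shifts \<open>t\<close> by a sum of terms \<open>\<plusminus>n\<^sup>l\<close> with \<open>L \<le> l \<le> M\<close>, and
  it contains at least \<open>2(M - L) - |e - e'|\<close> letters \<open>b\<^sup>\<plusminus>\<^sup>1\<close>. The relator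
  \<open>b\<^sup>m a b\<^sup>-\<^sup>m a b\<^sup>m a\<^sup>-\<^sup>1 b\<^sup>-\<^sup>m a\<^sup>-\<^sup>1\<close> consists of four \<open>b\<close>-segments at translations
  \<open>0, n\<^sup>m, n\<^sup>m + 1, 1\<close>, joined alternately at levels \<open>m\<close> and \<open>0\<close>. Size and divisibility of
  signed power sums show that every word joining two of its vertices is at least as long as
  the shorter arc between them; so for \<open>m \<ge> k\<close> it is a simple relation of length at least
  \<open>k\<close> without a shortcut.
\<close>

lemma power_int_inject_exp:
  fixes a :: "'a::linordered_field"
  assumes "1 < a"
  shows "a powi m = a powi k \<longleftrightarrow> m = k"
  using power_int_strict_increasing[OF _ assms] by (metis linorder_neqE order_less_irrefl)

lemma linear_le_power:
  fixes n :: nat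
  assumes "3 \<le> n"
  shows "2 * d + 1 \<le> n ^ d"
proof (induction d)
  case (Suc d)
  have "2 * Suc d + 1 \<le> 3 * (2 * d + 1)" by simp
  also have "\<dots> \<le> n * n ^ d" using Suc.IH assms by (intro mult_mono) auto
  finally show ?case by simp
qed simp

lemma power_le_mult_power_bound:
  fixes n :: nat
  assumes "3 \<le> n" and "M < m" and "n ^ m \<le> k * n ^ M + c" and "c < n ^ M"
  shows "2 * (m - M) + 1 \<le> k"
proof -
  have "n ^ (m - M) * n ^ M = n ^ m"
    using assms(2) by (simp flip: power_add)
  then have "n ^ (m - M) * n ^ M < (k + 1) * n ^ M"
    using assms(3,4) by simp
  then have "n ^ (m - M) \<le> k"
    by (simp only: mult_less_cancel2) simp
  then show ?thesis
    using linear_le_power[OF assms(1), of "m - M"] by linarith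
qed

subsection \<open>The affine model\<close>

definition aff_mult :: "rat \<times> rat \<Rightarrow> rat \<times> rat \<Rightarrow> rat \<times> rat" where
  "aff_mult x y = (fst x * fst y, fst x * snd y + snd x)"

definition aff_prod :: "(rat \<times> rat) list \<Rightarrow> rat \<times> rat" where
  "aff_prod ws = foldr aff_mult ws (1, 0)"

lemma aff_mult_assoc: "aff_mult (aff_mult x y) z = aff_mult x (aff_mult y z)"
  by (simp add: aff_mult_def algebra_simps)

lemma aff_mult_one [simp]: "aff_mult (1, 0) x = x" "aff_mult x (1, 0) = x"
  by (simp_all add: aff_mult_def)

lemma aff_prod_simps [simp]:
  "aff_prod [] = (1, 0)"
  "aff_prod (x # xs) = aff_mult x (aff_prod xs)"
  by (simp_all add: aff_prod_def)

lemma aff_prod_append: "aff_prod (xs @ ys) = aff_mult (aff_prod xs) (aff_prod ys)"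
  by (induction xs) (simp_all add: aff_mult_assoc)

lemma mult_BS: "monoid.mult (BS n) = aff_mult"
  by (auto simp: BS_def affQ_def aff_mult_def fun_eq_iff)

lemma one_BS: "one (BS n) = (1, 0)"
  by (simp add: BS_def affQ_def)

lemma word_prod_BS: "word_prod (BS n) ws = aff_prod ws"
  by (simp add: word_prod_def aff_prod_def mult_BS one_BS)

lemma group_affQ: "group affQ"
proof (rule groupI)
  fix x assume "x \<in> carrier affQ"
  then obtain r t where "x = (r, t)" "r \<noteq> 0" by (auto simp: affQ_def)
  then show "\<exists>y\<in>carrier affQ. y \<otimes>\<^bsub>affQ\<^esub> x = \<one>\<^bsub>affQ\<^esub>"
    by (intro bexI[of _ "(1 / r, - t / r)"]) (auto simp: affQ_def)
qed (auto simp: affQ_def algebra_simps)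

lemma inv_affQ: "r \<noteq> 0 \<Longrightarrow> inv\<^bsub>affQ\<^esub> (r, t) = (1 / r, - t / r)"
  by (rule group.inv_equality[OF group_affQ]) (auto simp: affQ_def)

lemma inv_BS_generator:
  assumes "n > 0" and "x \<in> {bs_a, bs_b n}"
  shows "inv\<^bsub>BS n\<^esub> x = inv\<^bsub>affQ\<^esub> x"
proof -
  have "{bs_a, bs_b n} \<subseteq> carrier affQ"
    using assms(1) by (auto simp: affQ_def bs_a_def bs_b_def)
  then have "subgroup (generate affQ {bs_a, bs_b n}) affQ"
    by (rule group.generate_is_subgroup[OF group_affQ])
  moreover have "x \<in> generate affQ {bs_a, bs_b n}"
    using assms(2) by (rule generate.incl)
  ultimately show ?thesis
    unfolding BS_def by (simp add: group.m_inv_consistent[OF group_affQ])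
qed

definition bs_a_inv :: "rat \<times> rat" where "bs_a_inv = (1, -1)"
definition bs_b_inv :: "nat \<Rightarrow> rat \<times> rat" where "bs_b_inv n = (1 / of_nat n, 0)"

definition bs_letters :: "nat \<Rightarrow> (rat \<times> rat) set" where
  "bs_letters n = {bs_a, bs_a_inv, bs_b n, bs_b_inv n}"

lemma sym_gens_BS:
  assumes "n > 1"
  shows "sym_gens (BS n) {bs_a, bs_b n} = bs_letters n"
proof -
  have "inv\<^bsub>BS n\<^esub> bs_a = bs_a_inv" "inv\<^bsub>BS n\<^esub> (bs_b n) = bs_b_inv n"
    using assms inv_BS_generator[of n] inv_affQ
    by (simp_all add: bs_a_def bs_b_def bs_a_inv_def bs_b_inv_def)
  then show ?thesis
    using assms by (auto simp: sym_gens_def bs_letters_def one_BS bs_a_def bs_b_def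
        bs_a_inv_def bs_b_inv_def)
qed

subsection \<open>Sums of signed powers\<close>

definition signed_powers :: "nat \<Rightarrow> int \<Rightarrow> int \<Rightarrow> rat set" where
  "signed_powers n L M = {\<tau>. \<exists>l\<in>{L..M}. \<bar>\<tau>\<bar> = of_nat n powi l}"

lemma signed_powers_mono:
  "L' \<le> L \<Longrightarrow> M \<le> M' \<Longrightarrow> signed_powers n L M \<subseteq> signed_powers n L' M'"
  by (force simp: signed_powers_def)

lemma abs_sum_list_signed_powers_le:
  assumes "n \<ge> 1" and "set ts \<subseteq> signed_powers n L M"
  shows "\<bar>sum_list ts\<bar> \<le> of_nat (length ts) * of_nat n powi M"
proof -
  have "\<bar>sum_list ts\<bar> \<le> sum_list (map abs ts)"
    by (rule sum_list_abs)
  also have "\<dots> \<le> sum_list (map (\<lambda>_. of_nat n powi M) ts)"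
  proof (intro sum_list_mono)
    fix \<tau> assume "\<tau> \<in> set ts"
    then have "\<tau> \<in> signed_powers n L M"
      using assms(2) by blast
    then obtain l where "l \<le> M" "\<bar>\<tau>\<bar> = of_nat n powi l"
      by (auto simp: signed_powers_def)
    then show "\<bar>\<tau>\<bar> \<le> of_nat n powi M"
      using assms(1) by (simp add: power_int_increasing)
  qed
  finally show ?thesis
    by (simp add: sum_list_triv)
qed

lemma sum_list_signed_powers_dvd:
  assumes "set ts \<subseteq> signed_powers n 1 M"
  shows "\<exists>z::int. sum_list ts = of_nat n * of_int z"
  using assms
proof (induction ts)
  case Nil
  show ?case by (intro exI[of _ 0]) simp
next
  case (Cons \<tau> ts)
  then obtain z where z: "sum_list ts = of_nat n * of_int z"
    by auto
  from Cons.prems obtain l where "1 \<le> l" "\<bar>\<tau>\<bar> = of_nat n powi l"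
    by (auto simp: signed_powers_def)
  then have "l = int (Suc (nat (l - 1)))"
    by simp
  with \<open>\<bar>\<tau>\<bar> = of_nat n powi l\<close> have abs_\<tau>: "\<bar>\<tau>\<bar> = of_nat n * of_int (int n ^ nat (l - 1))"
    by (metis power_int_of_nat power_Suc of_int_of_nat_eq of_int_power)
  define s where "s = (if \<tau> < 0 then - 1 else 1) * int n ^ nat (l - 1)"
  have "\<tau> = of_nat n * of_int s"
    using abs_\<tau> by (cases "\<tau> < 0") (simp_all add: s_def abs_if)
  with z show ?case
    by (intro exI[of _ "s + z"]) (simp add: algebra_simps)
qed

lemma signed_powers_sum_not_dvd:
  assumes n: "n > 1" and ts: "set ts \<subseteq> signed_powers n L M"
    and sum: "\<bar>sum_list ts\<bar> = of_nat N" and not_dvd: "\<not> n dvd N"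
  shows "L \<le> 0" and "of_nat N \<le> 1 + of_nat (length ts - 1) * (of_nat n powi M :: rat)"
proof -
  have "\<not> set ts \<subseteq> signed_powers n 1 M"
  proof
    assume "set ts \<subseteq> signed_powers n 1 M"
    then obtain z where "of_nat N = \<bar>of_nat n * of_int z :: rat\<bar>"
      using sum sum_list_signed_powers_dvd by metis
    then have "int N = int n * \<bar>z\<bar>"
      by (metis abs_mult of_int_abs of_int_eq_iff of_int_mult of_int_of_nat_eq abs_of_nat)
    with not_dvd show False
      by (metis dvd_triv_left int_dvd_int_iff)
  qed
  then obtain \<tau> l where \<tau>: "\<tau> \<in> set ts" "L \<le> l" "l \<le> 0" "\<bar>\<tau>\<bar> = of_nat n powi l"
    using ts by (force simp: signed_powers_def subset_iff)
  show "L \<le> 0"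
    using \<tau> by simp
  have "\<bar>\<tau>\<bar> \<le> of_nat n powi 0"
    using \<tau> n by (simp only:) (rule power_int_increasing, simp_all)
  then have small: "\<bar>\<tau>\<bar> \<le> 1"
    by simp
  have rest: "\<bar>sum_list (remove1 \<tau> ts)\<bar> \<le> of_nat (length ts - 1) * of_nat n powi M"
    using abs_sum_list_signed_powers_le[of n "remove1 \<tau> ts" L M] n ts set_remove1_subset[of \<tau> ts]
    by (simp add: length_remove1 \<tau>(1))
  have "of_nat N = \<bar>\<tau> + sum_list (remove1 \<tau> ts)\<bar>"
    using sum sum_list_map_remove1[OF \<tau>(1), of id] by simp
  also have "\<dots> \<le> \<bar>\<tau>\<bar> + \<bar>sum_list (remove1 \<tau> ts)\<bar>"
    by (rule abs_triangle_ineq)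
  also have "\<dots> \<le> 1 + of_nat (length ts - 1) * of_nat n powi M"
    using small rest by (rule add_mono)
  finally show "of_nat N \<le> 1 + of_nat (length ts - 1) * (of_nat n powi M :: rat)" .
qed

lemma length_signed_powers_sum_power:
  assumes n: "n \<ge> 3" and M: "0 \<le> M" and ts: "set ts \<subseteq> signed_powers n L M"
    and sum: "\<bar>sum_list ts\<bar> = of_nat n ^ m"
  shows "2 * int m + 1 \<le> int (length ts) + 2 * M"
proof (cases "int m \<le> M")
  case True
  moreover have "ts \<noteq> []"
    using sum n by auto
  ultimately show ?thesis
    by (cases ts) simp_all
next
  case False
  define M' where "M' = nat M"
  have M': "M = int M'" "M' < m"
    using M False by (auto simp: M'_def)
  have "of_nat n ^ m \<le> of_nat (length ts) * (of_nat n ^ M' :: rat)"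
    using abs_sum_list_signed_powers_le[OF _ ts] sum n M'(1) by (simp add: power_int_of_nat)
  then have le: "n ^ m \<le> length ts * n ^ M' + 0"
    using of_nat_le_iff[of "n ^ m" "length ts * n ^ M'", where 'a = rat] by simp
  have "2 * (m - M') + 1 \<le> length ts"
    using power_le_mult_power_bound[OF n M'(2) le] n by simp
  then show ?thesis
    using M' by simp
qed

lemma signed_powers_sum_power_pm_one:
  assumes n: "n > 1" and m: "m \<ge> 1" and ts: "set ts \<subseteq> signed_powers n L M"
    and sum: "\<bar>sum_list ts\<bar> = of_nat n ^ m + 1 \<or> \<bar>sum_list ts\<bar> = of_nat n ^ m - 1"
  shows "L \<le> 0" and "of_nat n ^ m \<le> 2 + of_nat (length ts - 1) * (of_nat n powi M :: rat)"
proof -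
  have power_pos: "1 \<le> n ^ m"
    using n by simp
  obtain N where sum_N: "\<bar>sum_list ts\<bar> = of_nat N" and N: "N = n ^ m + 1 \<or> N = n ^ m - 1"
  proof (cases "\<bar>sum_list ts\<bar> = of_nat n ^ m + 1")
    case True
    then show thesis
      using that[of "n ^ m + 1"] by simp
  next
    case False
    then show thesis
      using that[of "n ^ m - 1"] sum power_pos by (simp add: of_nat_diff)
  qed
  have "\<not> n dvd N"
  proof
    assume "n dvd N"
    moreover have "n dvd n ^ m"
      using m by (simp add: dvd_power)
    ultimately have "n dvd 1"
      using N
    proof (elim disjE)
      assume "n dvd N" "n dvd n ^ m" "N = n ^ m - 1"
      then have "n dvd n ^ m - N"
        by (simp add: dvd_diff_nat)
      then show "n dvd 1"
        using \<open>N = n ^ m - 1\<close> power_pos by simp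
    qed (use dvd_add_right_iff[of n "n ^ m" 1] in simp)
    with n show False
      by simp
  qed
  note not_dvd = signed_powers_sum_not_dvd[OF n ts sum_N this]
  show "L \<le> 0"
    by (rule not_dvd(1))
  have "of_nat n ^ m \<le> (of_nat N + 1 :: rat)"
    using N power_pos by (auto simp: of_nat_diff)
  with not_dvd(2) show "of_nat n ^ m \<le> 2 + of_nat (length ts - 1) * (of_nat n powi M :: rat)"
    by simp
qed

lemma length_signed_powers_sum_power_pm_one:
  assumes n: "n \<ge> 3" and m: "m \<ge> 2" and M: "0 \<le> M" and ts: "set ts \<subseteq> signed_powers n L M"
    and sum: "\<bar>sum_list ts\<bar> = of_nat n ^ m + 1 \<or> \<bar>sum_list ts\<bar> = of_nat n ^ m - 1"
  shows "2 * int m + 2 \<le> int (length ts) + 2 * M"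
proof -
  have bound: "of_nat n ^ m \<le> 2 + of_nat (length ts - 1) * (of_nat n powi M :: rat)"
    using signed_powers_sum_power_pm_one(2)[OF _ _ ts sum] n m by simp
  have "n ^ m = n * n ^ (m - 1)"
    using m by (cases m) auto
  moreover have "3 * (2 * (m - 1) + 1) \<le> n * n ^ (m - 1)"
    using linear_le_power[OF n, of "m - 1"] n by (intro mult_mono) auto
  ultimately have big: "2 * m + 3 \<le> n ^ m"
    using m by simp
  show ?thesis
  proof (cases "int m \<le> M")
    case True
    have "2 \<le> length ts"
    proof (rule ccontr)
      assume "\<not> 2 \<le> length ts"
      with bound have "of_nat (n ^ m) \<le> (of_nat 2 :: rat)"
        by simp
      with big show False
        by (simp only: of_nat_le_iff)
    qed
    with True show ?thesis
      by simp
  next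
    case False
    define M' where "M' = nat M"
    have M': "M = int M'" "M' < m"
      using M False by (auto simp: M'_def)
    have le: "n ^ m \<le> (length ts - 1) * n ^ M' + 2"
      using bound M'(1) of_nat_le_iff[of "n ^ m" "(length ts - 1) * n ^ M' + 2", where 'a = rat]
      by (simp add: power_int_of_nat add.commute)
    have "2 * (m - M') + 1 \<le> length ts - 1"
    proof (cases "M' = 0")
      case True
      then show ?thesis
        using le big by simp
    next
      case False
      then have "2 < n ^ M'"
        using n power_increasing[of 1 M' n] by simp
      then show ?thesis
        using power_le_mult_power_bound[OF n M'(2) le] by simp
    qed
    then show ?thesis
      using M' by simp
  qed
qed

subsection \<open>Words as walks\<close>

lemma aff_mult_bs_letter:
  assumes "n > 0" and "s \<in> bs_letters n"
  obtains (level) \<delta> :: int where "\<bar>\<delta>\<bar> = 1"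
      "aff_mult (of_nat n powi e, \<tau>) s = (of_nat n powi (e + \<delta>), \<tau>)"
    | (shift) \<sigma> where "\<bar>\<sigma>\<bar> = of_nat n powi e"
      "aff_mult (of_nat n powi e, \<tau>) s = (of_nat n powi e, \<tau> + \<sigma>)"
proof -
  consider "s = bs_a" | "s = bs_a_inv" | "s = bs_b n" | "s = bs_b_inv n"
    using assms(2) by (auto simp: bs_letters_def)
  then show thesis
  proof cases
    case 1
    then show thesis
      using shift[of "of_nat n powi e"] by (simp add: bs_a_def aff_mult_def)
  next
    case 2
    then show thesis
      using shift[of "- (of_nat n powi e)"] by (simp add: bs_a_inv_def aff_mult_def)
  next
    case 3
    then show thesis
      using level[of 1] assms(1) by (simp add: bs_b_def aff_mult_def power_int_add_1)
  next
    case 4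
    then show thesis
      using level[of "-1"] assms(1) by (simp add: bs_b_inv_def aff_mult_def power_int_diff)
  qed
qed

lemma bs_word_walk:
  assumes n: "n > 1" and "set w \<subseteq> bs_letters n"
    and "aff_mult (of_nat n powi e, \<tau>) (aff_prod w) = (of_nat n powi e', \<tau>')"
  shows "\<exists>L M ts. L \<le> min e e' \<and> max e e' \<le> M \<and> set ts \<subseteq> signed_powers n L M \<and>
    \<tau>' = \<tau> + sum_list ts \<and> int (length ts) + 2 * (M - L) - \<bar>e - e'\<bar> \<le> int (length w)"
  using assms(2,3)
proof (induction w arbitrary: e \<tau>)
  case Nil
  then have "e = e'" "\<tau>' = \<tau>"
    using n by (simp_all add: power_int_inject_exp)
  then show ?case
    by (intro exI[of _ e] exI[of _ "[]"]) simp
next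
  case (Cons s w)
  have s: "s \<in> bs_letters n" and w: "set w \<subseteq> bs_letters n"
    using Cons.prems(1) by simp_all
  have prod: "aff_mult (aff_mult (of_nat n powi e, \<tau>) s) (aff_prod w) = (of_nat n powi e', \<tau>')"
    using Cons.prems(2) by (simp add: aff_mult_assoc)
  from n have n0: "n > 0" by simp
  show ?case
  proof (cases rule: aff_mult_bs_letter[OF n0 s, where e = e and \<tau> = \<tau>, case_names level shift])
    case (level \<delta>)
    with prod have "aff_mult (of_nat n powi (e + \<delta>), \<tau>) (aff_prod w) = (of_nat n powi e', \<tau>')"
      by simp
    then obtain L M ts where IH: "L \<le> min (e + \<delta>) e'" "max (e + \<delta>) e' \<le> M"
        "set ts \<subseteq> signed_powers n L M" "\<tau>' = \<tau> + sum_list ts"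
        "int (length ts) + 2 * (M - L) - \<bar>e + \<delta> - e'\<bar> \<le> int (length w)"
      using Cons.IH[OF w] by blast
    have "set ts \<subseteq> signed_powers n (min L e) (max M e)"
      using IH(3) signed_powers_mono[of "min L e" L M "max M e" n] by simp
    moreover have "min L e \<le> min e e'" "max e e' \<le> max M e"
      using IH(1,2) by auto
    moreover have "int (length ts) + 2 * (max M e - min L e) - \<bar>e - e'\<bar> \<le> int (length (s # w))"
    proof -
      have "\<delta> = 1 \<or> \<delta> = -1"
        using level(1) by (auto simp: abs_if split: if_splits)
      then show ?thesis
        using IH(1,2,5) by (auto simp: abs_if min_def max_def split: if_splits)
    qed
    ultimately show ?thesis
      using IH(4) by blast
  next
    case (shift \<sigma>)
    with prod have "aff_mult (of_nat n powi e, \<tau> + \<sigma>) (aff_prod w) = (of_nat n powi e', \<tau>')"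
      by simp
    then obtain L M ts where IH: "L \<le> min e e'" "max e e' \<le> M"
        "set ts \<subseteq> signed_powers n L M" "\<tau>' = \<tau> + \<sigma> + sum_list ts"
        "int (length ts) + 2 * (M - L) - \<bar>e - e'\<bar> \<le> int (length w)"
      using Cons.IH[OF w] by blast
    have "\<sigma> \<in> signed_powers n L M"
      using IH(1,2) shift(1) by (auto simp: signed_powers_def)
    with IH show ?thesis
      by (intro exI[of _ L] exI[of _ M] exI[of _ "\<sigma> # ts"]) (auto simp: add.assoc)
  qed
qed

corollary bs_word_walk_nat:
  assumes "n > 1" and "set w \<subseteq> bs_letters n"
    and "aff_mult (of_nat n ^ e1, t1) (aff_prod w) = (of_nat n ^ e2, t2)"
  obtains L M ts where "L \<le> min (int e1) (int e2)" "max (int e1) (int e2) \<le> M"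
    "set ts \<subseteq> signed_powers n L M" "t2 = t1 + sum_list ts"
    "int (length ts) + 2 * (M - L) - \<bar>int e1 - int e2\<bar> \<le> int (length w)"
  using bs_word_walk[of n w "int e1" t1 "int e2" t2] assms by (auto simp: power_int_of_nat)

lemma bs_word_length_ge_level_diff:
  assumes "n > 1" and "set w \<subseteq> bs_letters n"
    and "aff_mult (of_nat n ^ e1, t1) (aff_prod w) = (of_nat n ^ e2, t2)"
  shows "\<bar>int e1 - int e2\<bar> \<le> int (length w)"
proof -
  obtain L M ts where L: "L \<le> min (int e1) (int e2)" and M: "max (int e1) (int e2) \<le> M"
    and "set ts \<subseteq> signed_powers n L M" "t2 = t1 + sum_list ts"
    and len: "int (length ts) + 2 * (M - L) - \<bar>int e1 - int e2\<bar> \<le> int (length w)"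
    by (rule bs_word_walk_nat[OF assms])
  from L M have "\<bar>int e1 - int e2\<bar> \<le> M - L"
    by (simp add: abs_le_iff)
  with len show ?thesis
    by simp
qed

lemma bs_word_length_shift_one:
  assumes n: "n > 1" and w: "set w \<subseteq> bs_letters n"
    and prod: "aff_mult (of_nat n ^ e1, t1) (aff_prod w) = (of_nat n ^ e2, t2)"
    and shift: "\<bar>t2 - t1\<bar> = 1"
  shows "e1 + e2 + 1 \<le> length w"
proof -
  obtain L M ts where "L \<le> min (int e1) (int e2)" and M: "max (int e1) (int e2) \<le> M"
    and ts: "set ts \<subseteq> signed_powers n L M" and t2: "t2 = t1 + sum_list ts"
    and len: "int (length ts) + 2 * (M - L) - \<bar>int e1 - int e2\<bar> \<le> int (length w)"
    by (rule bs_word_walk_nat[OF n w prod])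
  have sum: "\<bar>sum_list ts\<bar> = of_nat 1"
    using shift t2 by simp
  have "L \<le> 0"
    using signed_powers_sum_not_dvd(1)[OF n ts sum] n by simp
  moreover have "1 \<le> int (length ts)"
    using sum by (cases ts) auto
  moreover have "\<bar>int e1 - int e2\<bar> \<le> 2 * M - int e1 - int e2"
    using M by (simp add: abs_le_iff)
  ultimately show ?thesis
    using len by simp
qed

lemma bs_word_length_shift_power:
  assumes n: "n \<ge> 3" and w: "set w \<subseteq> bs_letters n"
    and prod: "aff_mult (of_nat n ^ e1, t1) (aff_prod w) = (of_nat n ^ e2, t2)"
    and shift: "\<bar>t2 - t1\<bar> = of_nat n ^ m"
  shows "2 * m + 1 \<le> length w + e1 + e2"
proof -
  have n1: "n > 1"
    using n by simp
  obtain L M ts where L: "L \<le> min (int e1) (int e2)" and M: "max (int e1) (int e2) \<le> M"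
    and ts: "set ts \<subseteq> signed_powers n L M" and t2: "t2 = t1 + sum_list ts"
    and len: "int (length ts) + 2 * (M - L) - \<bar>int e1 - int e2\<bar> \<le> int (length w)"
    by (rule bs_word_walk_nat[OF n1 w prod])
  have "2 * int m + 1 \<le> int (length ts) + 2 * M"
    using length_signed_powers_sum_power[OF n _ ts] M shift t2 by simp
  moreover have "\<bar>int e1 - int e2\<bar> \<le> int e1 + int e2 - 2 * L"
    using L by (simp add: abs_le_iff)
  ultimately show ?thesis
    using len by simp
qed

lemma bs_word_length_shift_power_pm_one:
  assumes n: "n \<ge> 3" and m: "m \<ge> 2" and w: "set w \<subseteq> bs_letters n"
    and prod: "aff_mult (of_nat n ^ e1, t1) (aff_prod w) = (of_nat n ^ e2, t2)"
    and shift: "\<bar>t2 - t1\<bar> = of_nat n ^ m + 1 \<or> \<bar>t2 - t1\<bar> = of_nat n ^ m - 1"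
  shows "2 * int m + 2 \<le> int (length w) + \<bar>int e1 - int e2\<bar>"
proof -
  have n1: "n > 1"
    using n by simp
  obtain L M ts where "L \<le> min (int e1) (int e2)" and M: "max (int e1) (int e2) \<le> M"
    and ts: "set ts \<subseteq> signed_powers n L M" and t2: "t2 = t1 + sum_list ts"
    and len: "int (length ts) + 2 * (M - L) - \<bar>int e1 - int e2\<bar> \<le> int (length w)"
    by (rule bs_word_walk_nat[OF n1 w prod])
  have sum: "\<bar>sum_list ts\<bar> = of_nat n ^ m + 1 \<or> \<bar>sum_list ts\<bar> = of_nat n ^ m - 1"
    using shift t2 by simp
  have "L \<le> 0"
    using signed_powers_sum_power_pm_one(1)[OF n1 _ ts sum] m by simp
  moreover have "2 * int m + 2 \<le> int (length ts) + 2 * M"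
    using length_signed_powers_sum_power_pm_one[OF n m _ ts sum] M by simp
  ultimately show ?thesis
    using len by simp
qed

subsection \<open>The relator cycle\<close>

definition bs_cycle :: "nat \<Rightarrow> nat \<Rightarrow> (rat \<times> rat) list" where
  "bs_cycle n m = replicate m (bs_b n) @ bs_a # replicate m (bs_b_inv n) @ bs_a #
     replicate m (bs_b n) @ bs_a_inv # replicate m (bs_b_inv n) @ [bs_a_inv]"

definition cycle_level :: "nat \<Rightarrow> nat \<Rightarrow> nat" where
  "cycle_level m x =
    (if x \<le> m then x else if x \<le> 2 * m + 1 then 2 * m + 1 - x
     else if x \<le> 3 * m + 2 then x - (2 * m + 2) else if x \<le> 4 * m + 3 then 4 * m + 3 - x else 0)"

definition cycle_shift :: "nat \<Rightarrow> nat \<Rightarrow> nat \<Rightarrow> rat" where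
  "cycle_shift n m x =
    (if x \<le> m then 0 else if x \<le> 2 * m + 1 then of_nat n ^ m
     else if x \<le> 3 * m + 2 then of_nat n ^ m + 1 else if x \<le> 4 * m + 3 then 1 else 0)"

lemma length_bs_cycle [simp]: "length (bs_cycle n m) = 4 * m + 4"
  by (simp add: bs_cycle_def)

lemma set_bs_cycle: "set (bs_cycle n m) \<subseteq> bs_letters n"
  by (auto simp: bs_cycle_def bs_letters_def)

lemma nth_bs_cycle:
  assumes "x < 4 * m + 4"
  shows "bs_cycle n m ! x =
    (if x < m then bs_b n else if x = m then bs_a else if x < 2 * m + 1 then bs_b_inv n
     else if x = 2 * m + 1 then bs_a else if x < 3 * m + 2 then bs_b n
     else if x = 3 * m + 2 then bs_a_inv else if x < 4 * m + 3 then bs_b_inv n else bs_a_inv)"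
proof -
  consider "x < m" | "x = m" | "m < x" "x < 2 * m + 1" | "x = 2 * m + 1"
    | "2 * m + 1 < x" "x < 3 * m + 2" | "x = 3 * m + 2" | "3 * m + 2 < x" "x < 4 * m + 3"
    | "x = 4 * m + 3"
    using assms by linarith
  then show ?thesis
    by cases (simp_all add: bs_cycle_def nth_append less_diff_conv2)
qed

lemma aff_prod_take_bs_cycle:
  assumes n: "n > 0" and "x \<le> 4 * m + 4"
  shows "aff_prod (take x (bs_cycle n m)) = (of_nat n ^ cycle_level m x, cycle_shift n m x)"
  using assms(2)
proof (induction x)
  case 0
  show ?case by (simp add: cycle_level_def cycle_shift_def)
next
  case (Suc x)
  then have step: "aff_prod (take (Suc x) (bs_cycle n m)) =
      aff_mult (of_nat n ^ cycle_level m x, cycle_shift n m x) (bs_cycle n m ! x)"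
    by (simp add: take_Suc_conv_app_nth aff_prod_append)
  consider "x < m" | "x = m" | "m < x" "x < 2 * m + 1" | "x = 2 * m + 1"
    | "2 * m + 1 < x" "x < 3 * m + 2" | "x = 3 * m + 2" | "3 * m + 2 < x" "x < 4 * m + 3"
    | "x = 4 * m + 3"
    using Suc.prems by linarith
  then have "aff_mult (of_nat n ^ cycle_level m x, cycle_shift n m x) (bs_cycle n m ! x) =
      (of_nat n ^ cycle_level m (Suc x), cycle_shift n m (Suc x))"
  proof cases
    case 1
    then have "cycle_level m (Suc x) = Suc (cycle_level m x)"
      by (simp add: cycle_level_def)
    with 1 show ?thesis
      by (simp add: nth_bs_cycle cycle_shift_def bs_b_def aff_mult_def)
  next
    case 3
    then have "cycle_level m x = Suc (cycle_level m (Suc x))"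
      by (simp add: cycle_level_def)
    with 3 n show ?thesis
      by (simp add: nth_bs_cycle cycle_shift_def bs_b_inv_def aff_mult_def)
  next
    case 5
    then have "cycle_level m (Suc x) = Suc (cycle_level m x)"
      by (simp add: cycle_level_def)
    with 5 show ?thesis
      by (simp add: nth_bs_cycle cycle_shift_def bs_b_def aff_mult_def)
  next
    case 7
    then have "cycle_level m x = Suc (cycle_level m (Suc x))"
      by (simp add: cycle_level_def)
    with 7 n show ?thesis
      by (simp add: nth_bs_cycle cycle_shift_def bs_b_inv_def aff_mult_def)
  qed (simp_all add: nth_bs_cycle cycle_level_def cycle_shift_def bs_a_def bs_a_inv_def aff_mult_def)
  with step show ?case
    by simp
qed

lemma length_word_ge_bs_cycle_dist:
  assumes n: "n \<ge> 3" and m: "m \<ge> 2" and xy: "x < y" "y \<le> 4 * m + 4"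
    and w: "set w \<subseteq> bs_letters n"
    and prod: "aff_prod (take y (bs_cycle n m)) =
      aff_mult (aff_prod (take x (bs_cycle n m))) (aff_prod w)"
  shows "min (y - x) (4 * m + 4 - (y - x)) \<le> length w"
proof -
  have n1: "n > 1"
    using n by simp
  have vertices: "aff_mult (of_nat n ^ cycle_level m x, cycle_shift n m x) (aff_prod w) =
      (of_nat n ^ cycle_level m y, cycle_shift n m y)"
    using prod xy aff_prod_take_bs_cycle[of n x m] aff_prod_take_bs_cycle[of n y m] n1 by simp
  note same_side = bs_word_length_ge_level_diff[OF n1 w vertices]
  note shift_power = bs_word_length_shift_power[OF n w vertices, where m = m]
  note shift_one = bs_word_length_shift_one[OF n1 w vertices]
  note shift_power_pm_one = bs_word_length_shift_power_pm_one[OF n m w vertices]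
  have "(1::rat) \<le> of_nat n ^ m"
    using n by simp
  then have abs_simps: "\<bar>1 - (of_nat n ^ m + 1)\<bar> = (of_nat n ^ m :: rat)"
      "\<bar>1 - of_nat n ^ m\<bar> = (of_nat n ^ m - 1 :: rat)"
      "\<bar>- (of_nat n ^ m) - 1\<bar> = (of_nat n ^ m + 1 :: rat)"
    by simp_all
  consider "x \<le> m" | "m < x" "x \<le> 2 * m + 1" | "2 * m + 1 < x" "x \<le> 3 * m + 2"
    | "3 * m + 2 < x" "x \<le> 4 * m + 3"
    using xy by linarith
  note x_side = this
  consider "y \<le> m" | "m < y" "y \<le> 2 * m + 1" | "2 * m + 1 < y" "y \<le> 3 * m + 2"
    | "3 * m + 2 < y" "y \<le> 4 * m + 3" | "y = 4 * m + 4"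
    using xy by linarith
  note y_side = this
  note defs = cycle_level_def cycle_shift_def abs_simps min_def
  \<comment> \<open>Sides 1 to 4 are the \<open>b\<close>-segments at translations \<open>0, n\<^sup>m, n\<^sup>m + 1, 1\<close>, and position
    \<open>4m + 4\<close> is the base point again. Within a side only the level changes; the translation
    differs by \<open>n\<^sup>m\<close> across a junction at level \<open>m\<close>, by \<open>1\<close> across a junction at level \<open>0\<close>,
    and by \<open>n\<^sup>m \<plusminus> 1\<close> between opposite sides.\<close>
  show ?thesis
  proof (cases rule: x_side[case_product y_side])
    case "1_1" then show ?thesis using xy same_side by (simp add: defs; linarith)
  next
    case "1_2" then show ?thesis using shift_power by (simp add: defs; linarith)
  next
    case "1_3" then show ?thesis using shift_power_pm_one by (simp add: defs; linarith)
  next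
    case "1_4" then show ?thesis using shift_one by (simp add: defs; linarith)
  next
    case "1_5" then show ?thesis using same_side by (simp add: defs; linarith)
  next
    case "2_2" then show ?thesis using xy same_side by (simp add: defs; linarith)
  next
    case "2_3" then show ?thesis using shift_one by (simp add: defs; linarith)
  next
    case "2_4" then show ?thesis using shift_power_pm_one by (simp add: defs; linarith)
  next
    case "2_5" then show ?thesis using shift_power by (simp add: defs; linarith)
  next
    case "3_3" then show ?thesis using xy same_side by (simp add: defs; linarith)
  next
    case "3_4" then show ?thesis using shift_power by (simp add: defs; linarith)
  next
    case "3_5" then show ?thesis using shift_power_pm_one by (simp add: defs; linarith)
  next
    case "4_4" then show ?thesis using xy same_side by (simp add: defs; linarith)
  next
    case "4_5" then show ?thesis using shift_one by (simp add: defs; linarith)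
  qed (use xy in linarith)+
qed

lemma take_eq_take_append_subword:
  assumes "1 \<le> p" and "p \<le> q"
  shows "take q ws = take (p - 1) ws @ subword ws p q"
proof -
  have "q = (p - 1) + (Suc q - p)"
    using assms by simp
  then show ?thesis
    unfolding subword_def by (metis take_add)
qed

lemma simple_relation_bs_cycle:
  assumes n: "n \<ge> 3" and m: "m \<ge> 2"
  shows "simple_relation (BS n) {bs_a, bs_b n} (bs_cycle n m)"
  unfolding simple_relation_def
proof (intro conjI allI impI)
  show "length (bs_cycle n m) > 2"
    by simp
  show "set (bs_cycle n m) \<subseteq> sym_gens (BS n) {bs_a, bs_b n}"
    using set_bs_cycle sym_gens_BS n by simp
  fix p q
  assume pq: "1 \<le> p \<and> p \<le> q \<and> q \<le> length (bs_cycle n m)"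
  then have lt: "p - 1 < q"
    by auto
  have split: "aff_prod (take q (bs_cycle n m)) =
      aff_mult (aff_prod (take (p - 1) (bs_cycle n m))) (aff_prod (subword (bs_cycle n m) p q))"
    using take_eq_take_append_subword[of p q "bs_cycle n m"] pq by (simp add: aff_prod_append)
  show "word_prod (BS n) (subword (bs_cycle n m) p q) = \<one>\<^bsub>BS n\<^esub> \<longleftrightarrow>
      p = 1 \<and> q = length (bs_cycle n m)"
  proof
    assume "word_prod (BS n) (subword (bs_cycle n m) p q) = \<one>\<^bsub>BS n\<^esub>"
    with split have "aff_prod (take q (bs_cycle n m)) =
        aff_mult (aff_prod (take (p - 1) (bs_cycle n m))) (aff_prod [])"
      by (simp add: word_prod_BS one_BS)
    then have "min (q - (p - 1)) (4 * m + 4 - (q - (p - 1))) \<le> 0"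
      using length_word_ge_bs_cycle_dist[OF n m lt, of "[]"] pq by simp
    with pq show "p = 1 \<and> q = length (bs_cycle n m)"
      by (simp add: min_def split: if_splits)
  next
    assume "p = 1 \<and> q = length (bs_cycle n m)"
    then show "word_prod (BS n) (subword (bs_cycle n m) p q) = \<one>\<^bsub>BS n\<^esub>"
      using aff_prod_take_bs_cycle[of n "4 * m + 4" m] n
      by (simp add: word_prod_BS one_BS subword_def cycle_level_def cycle_shift_def)
  qed
qed

theorem theorem13:
  fixes n k :: nat
  assumes "n > 2" and "k > 0"
  shows "\<not> k_chordal (BS n) {bs_a, bs_b n} k"
proof
  assume chordal: "k_chordal (BS n) {bs_a, bs_b n} k"
  define m where "m = k + 2"
  let ?C = "bs_cycle n m"
  have n: "n \<ge> 3" and m: "m \<ge> 2" and "k \<le> length ?C"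
    using assms(1) by (simp_all add: m_def)
  obtain i j w where ij: "1 \<le> i" "i < j" "j \<le> length ?C"
    and w: "set w \<subseteq> sym_gens (BS n) {bs_a, bs_b n}"
    and prod: "word_prod (BS n) (subword ?C i j) = word_prod (BS n) w"
    and short: "int (length w) \<le> min (int j - int i) (int (length ?C) - int j + int i - 2)"
    using chordal simple_relation_bs_cycle[OF n m] \<open>k \<le> length ?C\<close>
    unfolding k_chordal_def by blast
  have "aff_prod (take j ?C) = aff_mult (aff_prod (take (i - 1) ?C)) (aff_prod w)"
    using take_eq_take_append_subword[of i j ?C] ij prod by (simp add: aff_prod_append word_prod_BS)
  then have "min (j - (i - 1)) (4 * m + 4 - (j - (i - 1))) \<le> length w"
    using length_word_ge_bs_cycle_dist[OF n m, of "i - 1" j w] ij w sym_gens_BS n by simp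
  with ij short show False
    by (simp add: min_def split: if_splits)
qed

end
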